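(* Let $k\in\{-1,0,1\}$, $\beta>0$, let $\delta_k>0$ be the positive real solution of $\delta^3+k\delta-\frac{3\beta}{2}=0$, and let $R_b>0$ (with $R_b<1$ if $k=1$). Define \[ R_{\mathrm{AH}}=\frac{1}{\sqrt{\delta_k^2+k}},\quad C_k=\frac{1}{\sqrt{1-kR_b^2}+\delta_kR_b},\quad x_\Sigma=\frac{R_b\delta_k}{C_k},\quad \lambda_1=\frac{\beta R_b^3}{C_k},\quad \lambda_2=\frac{\beta C_k^2}{2\delta_k^3}, \] $h(x)=1-\frac{\lambda_1}{x}-\lambda_2x^2$, $B(u,r)=h(r/u)$, and consider the metric \[ g_{\mathrm{ext}}=-B(u,r)\,du^2-2\,du\,dr+r^2d\Omega^2,\qquad u>0,\ r>x_\Sigma u. \] Then there exists $x_*>x_\Sigma$ such that the hypersurface $r=xu$ is spacelike for $x>x_*$, null for $x=x_*$ and timelike for $x_\Sigma<x<x_*$. If $R_b<R_{\mathrm{AH}}$ and $x_{\mathrm{AH}}>x_\Sigma$ denotes the value with $h(x_{\mathrm{AH}})=0$ (the exterior apparent horizon $r=x_{\mathrm{AH}}u$), then $x_*>x_{\mathrm{AH}}$. Moreover, the curve $r=x_*u$ is an ingoing radial null geodesic (a solution of $\frac{dr}{du}=-\frac12B(u,r)$), and every solution $r(u)$ of $\frac{dr}{du}=-\frac12B(u,r)$ with $r(u_0)<x_*u_0$ for some $u_0>0$ reaches the matching surface $r=x_\Sigma u$ at some finite $u>u_0$; consequently every ingoing radial null geodesic escaping to null infinity other than $r=x_*u$ satisfies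 $r(u)>x_*u$ for all $u>0$, i.e. $r=x_*u$ is the first ingoing radial null geodesic that escapes to null infinity.
   Context: This is the exterior (outgoing Vaidya type metric with mass $M(u)=\lambda_1u/2$ and cosmological scalar field $\Lambda(u)=3\lambda_2/u^2$) of the self-similar stellar model whose interior is $-dt^2+(\delta_kt)^2\big(\frac{dR^2}{1-kR^2}+R^2d\Omega^2\big)$, with matching surface $R=R_b$ in the interior and $r=x_\Sigma u$ in the exterior. The curves $r=xu$ are the homothetic curves. $d\Omega^2=d\theta^2+\sin^2\theta\,d\psi^2$. *)

theory Defs
  imports "HOL-Analysis.Analysis"
begin

definition C_k :: "real \<Rightarrow> real \<Rightarrow> real \<Rightarrow> real" where
  "C_k k \<delta> Rb = 1 / (sqrt (1 - k * Rb\<^sup>2) + \<delta> * Rb)"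

definition x_Sigma :: "real \<Rightarrow> real \<Rightarrow> real \<Rightarrow> real" where
  "x_Sigma k \<delta> Rb = Rb * \<delta> / C_k k \<delta> Rb"

definition lambda1 :: "real \<Rightarrow> real \<Rightarrow> real \<Rightarrow> real \<Rightarrow> real" where
  "lambda1 k \<beta> \<delta> Rb = \<beta> * Rb ^ 3 / C_k k \<delta> Rb"

definition lambda2 :: "real \<Rightarrow> real \<Rightarrow> real \<Rightarrow> real \<Rightarrow> real" where
  "lambda2 k \<beta> \<delta> Rb = \<beta> * (C_k k \<delta> Rb)\<^sup>2 / (2 * \<delta> ^ 3)"

definition R_AH :: "real \<Rightarrow> real \<Rightarrow> real" where
  "R_AH k \<delta> = 1 / sqrt (\<delta>\<^sup>2 + k)"

definition hfun :: "real \<Rightarrow> real \<Rightarrow> real \<Rightarrow> real" where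
  "hfun l1 l2 x = 1 - l1 / x - l2 * x\<^sup>2"

definition B_ext :: "real \<Rightarrow> real \<Rightarrow> real \<Rightarrow> real \<Rightarrow> real" where
  "B_ext l1 l2 u r = hfun l1 l2 (r / u)"

text \<open>Coordinates (u, r, theta, psi); tangent vectors in the coordinate basis.
  The exterior metric g = -B du^2 - 2 du dr + r^2 (dtheta^2 + sin^2 theta dpsi^2)
  as a bilinear form at point p.\<close>

type_synonym vec4 = "real \<times> real \<times> real \<times> real"

definition gext :: "(real \<Rightarrow> real \<Rightarrow> real) \<Rightarrow> vec4 \<Rightarrow> vec4 \<Rightarrow> vec4 \<Rightarrow> real" where
  "gext B p V W = (case p of (u, r, th, ps) \<Rightarrow> case V of (a, b, c, d) \<Rightarrow>
      case W of (a', b', c', d') \<Rightarrow>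
        - B u r * a * a' - (a * b' + b * a') + r\<^sup>2 * (c * c' + (sin th)\<^sup>2 * d * d'))"

text \<open>Tangent space of the hypersurface r = x u (kernel of d(r - x u)).\<close>

definition homothetic_tangent :: "real \<Rightarrow> vec4 set" where
  "homothetic_tangent x = {(a, b, c, d). b = x * a}"

definition hs_spacelike :: "(vec4 \<Rightarrow> vec4 \<Rightarrow> vec4 \<Rightarrow> real) \<Rightarrow> vec4 \<Rightarrow> vec4 set \<Rightarrow> bool" where
  "hs_spacelike g p T \<longleftrightarrow> (\<forall>V\<in>T. V \<noteq> 0 \<longrightarrow> g p V V > 0)"

definition hs_null :: "(vec4 \<Rightarrow> vec4 \<Rightarrow> vec4 \<Rightarrow> real) \<Rightarrow> vec4 \<Rightarrow> vec4 set \<Rightarrow> bool" where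
  "hs_null g p T \<longleftrightarrow> (\<exists>V\<in>T. V \<noteq> 0 \<and> (\<forall>W\<in>T. g p V W = 0))"

definition hs_timelike :: "(vec4 \<Rightarrow> vec4 \<Rightarrow> vec4 \<Rightarrow> real) \<Rightarrow> vec4 \<Rightarrow> vec4 set \<Rightarrow> bool" where
  "hs_timelike g p T \<longleftrightarrow> \<not> hs_null g p T \<and> (\<exists>V\<in>T. g p V V < 0)"

definition homothetic_points :: "real \<Rightarrow> vec4 set" where
  "homothetic_points x = {(u, x * u, th, ps) | u th ps. u > 0 \<and> 0 < th \<and> th < pi}"

definition ingoing_null_ode :: "(real \<Rightarrow> real \<Rightarrow> real) \<Rightarrow> (real \<Rightarrow> real) \<Rightarrow> real \<Rightarrow> real set \<Rightarrow> bool" where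
  "ingoing_null_ode B r u S \<longleftrightarrow> (r has_real_derivative (- B u (r u) / 2)) (at u within S)"

end

theory Submission
  imports Defs
begin

text \<open>Along the homothetic curve \<open>r = x u\<close> the tangent vector \<open>\<partial>\<^sub>u + x \<partial>\<^sub>r\<close> has squared norm
  \<open>F(x) = -h(x) - 2x\<close>, and the sign of \<open>F(x)\<close> decides the causal character of the hypersurface
  \<open>r = x u\<close>. Since \<open>\<lambda>\<^sub>1, \<lambda>\<^sub>2 \<ge> 0\<close>, \<open>F\<close> is convex on \<open>(0, \<infinity>)\<close>; the matching conditions give
  \<open>F(x\<^sub>\<Sigma>) = -1/C\<^sub>k\<^sup>2 < 0\<close> and \<open>F\<close> grows quadratically, so \<open>F\<close> has a unique zero \<open>x\<^sub>* > x\<^sub>\<Sigma>\<close>,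
  being negative before it and positive after it.

  For a solution of \<open>dr/du = -B/2\<close> the ratio \<open>y = r/u\<close> satisfies \<open>u y' = F(y)/2\<close>. Below \<open>x\<^sub>*\<close> the
  right-hand side is bounded away from zero, so \<open>y\<close> decreases at least like \<open>ln u\<close> and reaches
  \<open>x\<^sub>\<Sigma>\<close> in finite time. A solution touching \<open>x\<^sub>*\<close> cannot leave it upwards, because convexity
  bounds \<open>F\<close> by a linear function vanishing at \<open>x\<^sub>*\<close> and Gronwall's argument applies.\<close>

definition homothetic_norm :: "real \<Rightarrow> real \<Rightarrow> real \<Rightarrow> real" where
  "homothetic_norm l1 l2 x = - hfun l1 l2 x - 2 * x"

lemma convex_on_homothetic_norm:
  assumes "l1 \<ge> 0" "l2 \<ge> 0"
  shows "convex_on {0<..} (homothetic_norm l1 l2)"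
proof -
  have eq: "homothetic_norm l1 l2 = (\<lambda>x. l1 * inverse x + l2 * x\<^sup>2 + (- 2 * x - 1))"
    by (auto simp: fun_eq_iff homothetic_norm_def hfun_def divide_inverse)
  have affine: "convex_on {0<..} (\<lambda>x::real. - 2 * x - 1)"
    by (rule convex_onI) (auto simp: algebra_simps)
  show ?thesis
    unfolding eq using assms affine
    by (intro convex_on_add convex_on_cmul convex_on_inverse
        convex_on_subset[OF convex_power2]) auto
qed

lemma convex_on_Ici_homothetic_norm:
  assumes "l1 \<ge> 0" "l2 \<ge> 0" "a > 0"
  shows "convex_on {a..} (homothetic_norm l1 l2)"
  by (rule convex_on_subset[OF convex_on_homothetic_norm]) (use assms in auto)

lemma continuous_on_homothetic_norm:
  assumes "0 < a"
  shows "continuous_on {a..b} (homothetic_norm l1 l2)"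
  using assms unfolding homothetic_norm_def hfun_def by (intro continuous_intros) auto

lemma homothetic_norm_has_root:
  assumes l1: "l1 \<ge> 0" and l2: "l2 > 0" and a: "a > 0"
    and neg: "homothetic_norm l1 l2 a < 0"
  shows "\<exists>c>a. homothetic_norm l1 l2 c = 0"
proof -
  define M where "M = a + 3 / l2 + 1"
  have "3 / l2 > 0" using l2 by simp
  then have M: "M > 1" "M > a"
    using a unfolding M_def by linarith+
  have "l2 * M = l2 * a + 3 + l2" "l2 * a > 0"
    using l2 a by (simp_all add: M_def algebra_simps)
  then have "l2 * M \<ge> 3"
    using l2 by linarith
  with M have "l2 * M\<^sup>2 - 2 * M \<ge> M"
    by (simp add: power2_eq_square)
  moreover have "l1 / M \<ge> 0" using l1 M by simp
  ultimately have "homothetic_norm l1 l2 M > 0"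
    using M unfolding homothetic_norm_def hfun_def by linarith
  then obtain c where "a \<le> c" "c \<le> M" "homothetic_norm l1 l2 c = 0"
    using IVT'[of "homothetic_norm l1 l2" a 0 M] neg M continuous_on_homothetic_norm[OF a] by auto
  moreover have "c \<noteq> a" using neg \<open>homothetic_norm l1 l2 c = 0\<close> by auto
  ultimately show ?thesis
    by (intro exI[of _ c]) auto
qed

lemma convex_on_sign_change:
  fixes f :: "real \<Rightarrow> real"
  assumes cvx: "convex_on {a..} f" and fa: "f a < 0" and ac: "a < c" and fc: "f c = 0"
  shows "a \<le> x \<Longrightarrow> x < c \<Longrightarrow> f x < 0"
    and "c < x \<Longrightarrow> f x > 0"
proof -
  assume x: "a \<le> x" "x < c"
  have "f x \<le> (f c - f a) / (c - a) * (x - a) + f a"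
    using convex_onD_Icc'[of a c f x] convex_on_subset[OF cvx, of "{a..c}"] x by auto
  also have "\<dots> = f a * ((c - x) / (c - a))"
    using ac fc by (simp add: field_simps)
  also have "\<dots> < 0"
    using fa ac x by (intro mult_neg_pos divide_pos_pos) auto
  finally show "f x < 0" .
next
  assume x: "c < x"
  have "f c \<le> (f x - f a) / (x - a) * (c - a) + f a"
    using convex_onD_Icc'[of a x f c] convex_on_subset[OF cvx, of "{a..x}"] ac x by auto
  then have "- f a * (x - c) \<le> f x * (c - a)"
    using ac x fc by (simp add: field_simps)
  moreover have "- f a * (x - c) > 0"
    using fa x by (simp add: mult_neg_pos)
  ultimately have "f x * (c - a) > 0"
    by linarith
  then show "f x > 0"
    using ac by (simp add: zero_less_mult_iff)
qed

lemma gext_homothetic: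
  assumes "u \<noteq> 0"
  shows "gext (B_ext l1 l2) (u, x * u, th, ps) (a, x * a, c, d) (a', x * a', c', d')
    = homothetic_norm l1 l2 x * a * a' + (x * u)\<^sup>2 * (c * c' + (sin th)\<^sup>2 * d * d')"
  using assms unfolding gext_def B_ext_def homothetic_norm_def by (simp add: algebra_simps)

lemma homothetic_pointsE:
  assumes "p \<in> homothetic_points x"
  obtains u th ps where "p = (u, x * u, th, ps)" "u > 0" "sin th > 0"
  using assms unfolding homothetic_points_def by (auto intro: sin_gt_zero)

lemma homothetic_spacelike:
  assumes x: "x > 0" and p: "p \<in> homothetic_points x" and F: "homothetic_norm l1 l2 x > 0"
  shows "hs_spacelike (gext (B_ext l1 l2)) p (homothetic_tangent x)"
  unfolding hs_spacelike_def
proof (intro ballI impI)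
  obtain u th ps where p: "p = (u, x * u, th, ps)" "u > 0" "sin th > 0"
    using p by (rule homothetic_pointsE)
  fix V assume "V \<in> homothetic_tangent x" "V \<noteq> 0"
  then obtain a c d where V: "V = (a, x * a, c, d)" "a \<noteq> 0 \<or> c \<noteq> 0 \<or> d \<noteq> 0"
    by (cases V) (auto simp: homothetic_tangent_def zero_prod_def)
  define Q where "Q = c\<^sup>2 + (sin th * d)\<^sup>2"
  have "gext (B_ext l1 l2) p V V
      = homothetic_norm l1 l2 x * a * a + (x * u)\<^sup>2 * (c * c + (sin th)\<^sup>2 * d * d)"
    using p by (simp add: V gext_homothetic)
  also have "\<dots> = homothetic_norm l1 l2 x * a\<^sup>2 + (x * u)\<^sup>2 * Q"
    by (simp add: Q_def power2_eq_square algebra_simps)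
  finally have "gext (B_ext l1 l2) p V V = homothetic_norm l1 l2 x * a\<^sup>2 + (x * u)\<^sup>2 * Q" .
  moreover have "(x * u)\<^sup>2 > 0" "Q \<ge> 0"
    using x p by (simp_all add: Q_def)
  moreover have "a = 0 \<Longrightarrow> Q > 0"
    using V p unfolding Q_def by (auto simp: sum_power2_gt_zero_iff)
  ultimately show "gext (B_ext l1 l2) p V V > 0"
    using F by (cases "a = 0") (auto intro: add_pos_nonneg)
qed

lemma homothetic_null:
  assumes p: "p \<in> homothetic_points x" and F: "homothetic_norm l1 l2 x = 0"
  shows "hs_null (gext (B_ext l1 l2)) p (homothetic_tangent x)"
  unfolding hs_null_def
proof (intro bexI conjI ballI)
  obtain u th ps where p: "p = (u, x * u, th, ps)" "u > 0"
    using p by (rule homothetic_pointsE)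
  fix W assume "W \<in> homothetic_tangent x"
  then obtain a' c' d' where "W = (a', x * a', c', d')"
    by (cases W) (auto simp: homothetic_tangent_def)
  then show "gext (B_ext l1 l2) p (1, x * 1, 0, 0) W = 0"
    using p F by (simp add: gext_homothetic del: mult_1_right)
qed (auto simp: homothetic_tangent_def zero_prod_def)

lemma homothetic_timelike:
  assumes x: "x > 0" and p: "p \<in> homothetic_points x" and F: "homothetic_norm l1 l2 x < 0"
  shows "hs_timelike (gext (B_ext l1 l2)) p (homothetic_tangent x)"
proof -
  obtain u th ps where p: "p = (u, x * u, th, ps)" "u > 0" "sin th > 0"
    using p by (rule homothetic_pointsE)
  have g: "gext (B_ext l1 l2) p (a, x * a, c, d) (a', x * a', c', d')
      = homothetic_norm l1 l2 x * a * a' + (x * u)\<^sup>2 * (c * c' + (sin th)\<^sup>2 * d * d')"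
    for a c d a' c' d'
    using p by (simp add: gext_homothetic)
  have xu: "x * u \<noteq> 0" using x p by simp
  have "\<not> hs_null (gext (B_ext l1 l2)) p (homothetic_tangent x)"
  proof
    assume "hs_null (gext (B_ext l1 l2)) p (homothetic_tangent x)"
    then obtain a c d where V: "(a, x * a, c, d) \<noteq> 0"
      and orth: "\<And>W. W \<in> homothetic_tangent x \<Longrightarrow> gext (B_ext l1 l2) p (a, x * a, c, d) W = 0"
      unfolding hs_null_def homothetic_tangent_def by auto
    have "a = 0" using orth[of "(1, x * 1, 0, 0)"] F
      unfolding g by (simp add: homothetic_tangent_def)
    moreover have "c = 0" using orth[of "(0, x * 0, 1, 0)"] xu
      unfolding g by (simp add: homothetic_tangent_def)
    moreover have "d = 0" using orth[of "(0, x * 0, 0, 1)"] xu p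
      unfolding g by (simp add: homothetic_tangent_def)
    ultimately show False using V by (simp add: zero_prod_def)
  qed
  moreover have "gext (B_ext l1 l2) p (1, x * 1, 0, 0) (1, x * 1, 0, 0) < 0"
    using F unfolding g by simp
  ultimately show ?thesis
    unfolding hs_timelike_def homothetic_tangent_def by blast
qed

lemma homothetic_ratio_has_derivative:
  assumes "ingoing_null_ode (B_ext l1 l2) r u S" and u: "u > 0"
  shows "((\<lambda>t. r t / t) has_real_derivative homothetic_norm l1 l2 (r u / u) / (2 * u)) (at u within S)"
proof -
  have "((\<lambda>t. r t / t) has_real_derivative ((- B_ext l1 l2 u (r u) / 2) * u - r u * 1) / (u * u))
      (at u within S)"
    using DERIV_divide[OF assms(1)[unfolded ingoing_null_ode_def] DERIV_ident] u by simp
  moreover have "((- B_ext l1 l2 u (r u) / 2) * u - r u * 1) / (u * u)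
      = homothetic_norm l1 l2 (r u / u) / (2 * u)"
    using u unfolding B_ext_def homothetic_norm_def by (simp add: field_simps)
  ultimately show ?thesis by simp
qed

lemma DERIV_neg_below_imp_le_initial:
  fixes y :: "real \<Rightarrow> real"
  assumes cont: "continuous_on {a..} y"
    and neg: "\<And>u. a \<le> u \<Longrightarrow> y u \<le> y a \<Longrightarrow> \<exists>D<0. (y has_real_derivative D) (at u within {a..})"
    and b: "a \<le> b"
  shows "y b \<le> y a"
proof (rule ccontr)
  assume above: "\<not> y b \<le> y a"
  define T where "T = {a..b} \<inter> y -` {..y a}"
  have "closed T"
    unfolding T_def
    by (rule continuous_closed_preimage) (use continuous_on_subset[OF cont] in auto)
  moreover have "bounded T"
    unfolding T_def by (rule bounded_subset[of "{a..b}"]) auto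
  ultimately have "compact T"
    by (simp add: compact_eq_bounded_closed)
  moreover have "a \<in> T" using b by (simp add: T_def)
  ultimately obtain t where t: "t \<in> T" "\<And>s. s \<in> T \<Longrightarrow> s \<le> t"
    using continuous_attains_sup[of T "\<lambda>s. s"] by auto
  then have t_le: "a \<le> t" "t \<le> b" "y t \<le> y a" by (auto simp: T_def)
  with above have "t < b" by (cases "t = b") auto
  obtain D where "D < 0" "(y has_real_derivative D) (at t within {a..})"
    using neg t_le by blast
  then obtain d where d: "d > 0" "\<And>h. h > 0 \<Longrightarrow> t + h \<in> {a..} \<Longrightarrow> h < d \<Longrightarrow> y (t + h) < y t"
    using has_real_derivative_neg_dec_right by blast
  define h where "h = min (d / 2) (b - t)"
  have h: "h > 0" "h < d" "t + h \<le> b"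
    using d \<open>t < b\<close> by (auto simp: h_def)
  then have "y (t + h) < y t"
    using d t_le by auto
  then have "t + h \<in> T"
    using h t_le by (auto simp: T_def)
  with t h show False by fastforce
qed

lemma DERIV_le_neg_inverse_imp_log_decay:
  fixes y :: "real \<Rightarrow> real"
  assumes a: "0 < a" "a \<le> b" and cont: "continuous_on {a..b} y"
    and deriv: "\<And>x. a < x \<Longrightarrow> x < b \<Longrightarrow> \<exists>D. (y has_real_derivative D) (at x) \<and> D \<le> - c / x"
  shows "y b \<le> y a - c * ln (b / a)"
proof -
  define w where "w t = y t + c * ln t" for t
  have "w b \<le> w a"
  proof (rule DERIV_nonpos_imp_decreasing_open[OF a(2)])
    show "continuous_on {a..b} w"
      unfolding w_def using a by (intro continuous_intros cont) auto
    fix x assume x: "a < x" "x < b"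
    then obtain D where D: "(y has_real_derivative D) (at x)" "D \<le> - c / x"
      using deriv by blast
    have "(w has_real_derivative D + c * inverse x) (at x)"
      unfolding w_def using D(1) x a by (auto intro!: derivative_eq_intros simp: divide_inverse)
    moreover have "D + c * inverse x \<le> 0"
      using D(2) by (simp add: divide_inverse)
    ultimately show "\<exists>D. (w has_real_derivative D) (at x) \<and> D \<le> 0" by blast
  qed
  then show ?thesis
    using a by (simp add: w_def ln_div algebra_simps)
qed

lemma DERIV_le_linear_imp_le:
  fixes y :: "real \<Rightarrow> real"
  assumes a: "0 < a" "a \<le> b" and cont: "continuous_on {a..b} y"
    and deriv: "\<And>x. a < x \<Longrightarrow> x < b \<Longrightarrow> \<exists>D. (y has_real_derivative D) (at x) \<and> D \<le> L * (y x - c) / x"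
    and start: "y a \<le> c"
  shows "y b \<le> c"
proof -
  define z where "z t = (y t - c) * exp (- L * ln t)" for t
  have "z b \<le> z a"
  proof (rule DERIV_nonpos_imp_decreasing_open[OF a(2)])
    show "continuous_on {a..b} z"
      unfolding z_def using a by (intro continuous_intros cont) auto
    fix x assume x: "a < x" "x < b"
    then obtain D where D: "(y has_real_derivative D) (at x)" "D \<le> L * (y x - c) / x"
      using deriv by blast
    define E where "E = exp (- L * ln x)"
    have "(z has_real_derivative D * E + (y x - c) * (E * (- L * inverse x))) (at x)"
      unfolding z_def E_def using D(1) x a
      by (auto intro!: derivative_eq_intros simp: divide_inverse)
    moreover have "D * E + (y x - c) * (E * (- L * inverse x)) = E * (D - L * (y x - c) / x)"
      by (simp add: divide_inverse algebra_simps)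
    moreover have "E * (D - L * (y x - c) / x) \<le> 0"
      using D(2) by (simp add: E_def mult_nonneg_nonpos)
    ultimately show "\<exists>D. (z has_real_derivative D) (at x) \<and> D \<le> 0" by metis
  qed
  moreover have "z a \<le> 0"
    using start by (simp add: z_def mult_nonpos_nonneg)
  ultimately have "(y b - c) * exp (- L * ln b) \<le> 0"
    by (simp add: z_def)
  then show ?thesis
    by (simp add: mult_le_0_iff)
qed

lemma homothetic_ratio_falls_below:
  assumes l: "l1 \<ge> 0" "l2 \<ge> 0" and xS: "0 < xS" "xS < xs"
    and F_xS: "homothetic_norm l1 l2 xS < 0" and F_xs: "homothetic_norm l1 l2 xs = 0"
    and u0: "u0 > 0" and y_cont: "continuous_on {u0..} y"
    and y_deriv: "\<And>u. u0 \<le> u \<Longrightarrow>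
      (y has_real_derivative homothetic_norm l1 l2 (y u) / (2 * u)) (at u within {u0..})"
    and y_start: "y u0 < xs"
  shows "\<exists>u\<ge>u0. y u \<le> xS"
proof (rule ccontr)
  assume "\<not> ?thesis"
  then have y_above: "y u > xS" if "u \<ge> u0" for u
    using that by force
  define F where "F = homothetic_norm l1 l2"
  have cvx: "convex_on {xS..} F"
    unfolding F_def using convex_on_Ici_homothetic_norm[OF l xS(1)] .
  have F_neg: "F x < 0" if "xS \<le> x" "x < xs" for x
    using convex_on_sign_change(1)[OF cvx _ xS(2)] F_xS F_xs that by (simp add: F_def)
  have y_below: "y u \<le> y u0" if "u \<ge> u0" for u
  proof (rule DERIV_neg_below_imp_le_initial[OF y_cont _ that])
    fix v assume v: "u0 \<le> v" "y v \<le> y u0"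
    then have "F (y v) < 0"
      using F_neg y_above[OF v(1)] y_start by simp
    then show "\<exists>D<0. (y has_real_derivative D) (at v within {u0..})"
      using y_deriv[OF v(1)] v u0 by (intro exI[of _ "F (y v) / (2 * v)"]) (auto simp: F_def divide_neg_pos)
  qed
  define m where "m = - max (F xS) (F (y u0))"
  have m: "m > 0"
    using F_xS F_neg[of "y u0"] y_above[of u0] y_start by (auto simp: m_def F_def)
  have F_le: "F (y u) \<le> - m" if "u \<ge> u0" for u
    using convex_on_le_max[of xS "y u0" F "y u"] convex_on_subset[OF cvx, of "{xS..y u0}"]
      y_above[OF that] y_below[OF that] by (auto simp: m_def)
  define b where "b = u0 * exp (2 * (y u0 - xS) / m)"
  have "exp (2 * (y u0 - xS) / m) > 1"
    using y_above[of u0] m by simp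
  then have b: "u0 < b"
    using u0 by (simp add: b_def)
  have interior: "interior {u0..} = {u0<..}"
    by (rule interior_Ici[of "u0 - 1"]) simp
  have "y b \<le> y u0 - m / 2 * ln (b / u0)"
  proof (rule DERIV_le_neg_inverse_imp_log_decay[OF u0])
    show "continuous_on {u0..b} y"
      by (rule continuous_on_subset[OF y_cont]) auto
    fix x assume x: "u0 < x" "x < b"
    have "at x within {u0..} = at x"
      by (rule at_within_interior) (use x in \<open>simp add: interior\<close>)
    then have "(y has_real_derivative F (y x) / (2 * x)) (at x)"
      using y_deriv[of x] x by (simp add: F_def)
    moreover have "F (y x) / (2 * x) \<le> - (m / 2) / x"
      using F_le[of x] x u0 by (simp add: field_simps)
    ultimately show "\<exists>D. (y has_real_derivative D) (at x) \<and> D \<le> - (m / 2) / x"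
      by blast
  qed (use b in simp)
  also have "ln (b / u0) = 2 * (y u0 - xS) / m"
    using u0 by (simp add: b_def)
  finally have "y b \<le> xS"
    using m by (simp add: field_simps)
  with y_above[of b] b show False by simp
qed

lemma ingoing_ray_reaches_matching_surface:
  assumes l: "l1 \<ge> 0" "l2 \<ge> 0" and xS: "0 < xS" "xS < xs"
    and F_xS: "homothetic_norm l1 l2 xS < 0" and F_xs: "homothetic_norm l1 l2 xs = 0"
    and u0: "u0 > 0" "xS * u0 < r u0" "r u0 < xs * u0"
    and cont: "continuous_on {u0..} r"
    and ode: "\<forall>u \<ge> u0. (\<forall>u'\<in>{u0..u}. r u' > xS * u') \<longrightarrow> ingoing_null_ode (B_ext l1 l2) r u {u0..}"
  shows "\<exists>u1>u0. r u1 = xS * u1"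
proof (rule ccontr)
  assume no_hit: "\<not> ?thesis"
  have above: "r u > xS * u" if u: "u \<ge> u0" for u
  proof (rule ccontr)
    assume "\<not> r u > xS * u"
    moreover have "continuous_on {u0..u} (\<lambda>t. r t - xS * t)"
      by (intro continuous_intros continuous_on_subset[OF cont]) auto
    ultimately obtain t where t: "u0 \<le> t" "t \<le> u" "r t - xS * t = 0"
      using IVT2'[of "\<lambda>t. r t - xS * t" u 0 u0] u0 u by auto
    moreover have "t \<noteq> u0" using t u0 by auto
    ultimately show False using no_hit by auto
  qed
  define y where "y t = r t / t" for t
  have "\<exists>u\<ge>u0. y u \<le> xS"
  proof (rule homothetic_ratio_falls_below[OF l xS F_xS F_xs u0(1)])
    show "continuous_on {u0..} y"
      unfolding y_def using cont u0 by (intro continuous_intros) auto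
    show "y u0 < xs"
      using u0 by (simp add: y_def pos_divide_less_eq)
    fix u assume "u0 \<le> u"
    then show "(y has_real_derivative homothetic_norm l1 l2 (y u) / (2 * u)) (at u within {u0..})"
      using homothetic_ratio_has_derivative[of l1 l2 r u "{u0..}"] ode above u0
      unfolding y_def[abs_def] by auto
  qed
  then obtain u where "u \<ge> u0" "y u \<le> xS"
    by blast
  with above[of u] u0 show False
    by (simp add: y_def pos_divide_le_eq)
qed

lemma homothetic_ratio_stays_at_root:
  assumes l: "l1 \<ge> 0" "l2 \<ge> 0" and xS: "0 < xS" "xS < xs"
    and F_xS: "homothetic_norm l1 l2 xS < 0" and F_xs: "homothetic_norm l1 l2 xs = 0"
    and y_deriv: "\<And>u. u > 0 \<Longrightarrow> (y has_real_derivative homothetic_norm l1 l2 (y u) / (2 * u)) (at u)"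
    and y_ge: "\<And>u. u > 0 \<Longrightarrow> y u \<ge> xs"
    and u1: "u1 > 0" "y u1 = xs" and u2: "u2 > 0"
  shows "y u2 = xs"
proof -
  define F where "F = homothetic_norm l1 l2"
  have y_cont: "continuous_on {a..b} y" if "a > 0" for a b
    using that by (auto intro!: continuous_at_imp_continuous_on DERIV_isCont[OF y_deriv])
  have cvx: "convex_on {xS..} F"
    unfolding F_def using convex_on_Ici_homothetic_norm[OF l xS(1)] .
  have F_nonneg: "F (y u) \<ge> 0" if "u > 0" for u
    using convex_on_sign_change(2)[OF cvx _ xS(2), of "y u"] F_xS F_xs y_ge[OF that]
    by (cases "y u = xs") (auto simp: F_def)
  have y_mono: "y a \<le> y b" if "0 < a" "a \<le> b" for a b
  proof (rule DERIV_nonneg_imp_increasing_open[OF that(2) _ y_cont[OF that(1)]])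
    fix x assume "a < x" "x < b"
    then have "x > 0" using that by simp
    then show "\<exists>D. (y has_real_derivative D) (at x) \<and> D \<ge> 0"
      using y_deriv F_nonneg by (intro exI[of _ "F (y x) / (2 * x)"]) (auto simp: F_def)
  qed
  show ?thesis
  proof (cases "u2 \<le> u1")
    case True
    then show ?thesis
      using y_mono[OF u2 True] y_ge[OF u2] u1(2) by simp
  next
    case False
    define L where "L = F (y u2) / (2 * (y u2 - xs))"
    have "y u2 \<le> xs"
    proof (rule DERIV_le_linear_imp_le[OF u1(1) _ y_cont[OF u1(1)]])
      fix x assume x: "u1 < x" "x < u2"
      have "xs \<le> y x" "y x \<le> y u2"
        using y_ge y_mono x u1 by auto
      then have "F (y x) \<le> (F (y u2) - F xs) / (y u2 - xs) * (y x - xs) + F xs"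
        using convex_onD_Icc'[of xs "y u2" F "y x"] convex_on_subset[OF cvx, of "{xs..y u2}"] xS
        by auto
      then have "F (y x) \<le> F (y u2) / (y u2 - xs) * (y x - xs)"
        using F_xs by (simp add: F_def)
      then have "F (y x) / (2 * x) \<le> F (y u2) / (y u2 - xs) * (y x - xs) / (2 * x)"
        using x u1 by (intro divide_right_mono) auto
      also have "\<dots> = L * (y x - xs) / x"
        by (simp add: L_def)
      finally show "\<exists>D. (y has_real_derivative D) (at x) \<and> D \<le> L * (y x - xs) / x"
        using y_deriv[of x] x u1 by (intro exI[of _ "F (y x) / (2 * x)"]) (auto simp: F_def)
    qed (use False u1 in auto)
    with y_ge[OF u2] show ?thesis by simp
  qed
qed

lemma escaping_ray_above_critical:
  assumes l: "l1 \<ge> 0" "l2 \<ge> 0" and xS: "0 < xS" "xS < xs"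
    and F_xS: "homothetic_norm l1 l2 xS < 0" and F_xs: "homothetic_norm l1 l2 xs = 0"
    and r: "\<forall>u>0. ingoing_null_ode (B_ext l1 l2) r u UNIV \<and> r u > xS * u"
    and off: "\<exists>u>0. r u \<noteq> xs * u"
  shows "\<forall>u>0. r u > xs * u"
proof (rule ccontr)
  assume "\<not> ?thesis"
  then obtain u1 where u1: "u1 > 0" "r u1 \<le> xs * u1" by auto
  obtain u2 where u2: "u2 > 0" "r u2 \<noteq> xs * u2"
    using off by blast
  define y where "y t = r t / t" for t
  have r_deriv: "(r has_real_derivative - B_ext l1 l2 u (r u) / 2) (at u)" if "u > 0" for u
    using r that by (simp add: ingoing_null_ode_def)
  have y_deriv: "(y has_real_derivative homothetic_norm l1 l2 (y u) / (2 * u)) (at u)" if "u > 0" for u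
    using homothetic_ratio_has_derivative[of l1 l2 r u UNIV] r that
    unfolding y_def[abs_def] by simp
  have y_ge: "y u \<ge> xs" if u: "u > 0" for u
  proof (rule ccontr)
    assume "\<not> y u \<ge> xs"
    then have "r u < xs * u"
      using u by (simp add: y_def le_divide_eq)
    moreover have "continuous_on {u..} r"
      using u by (auto intro!: continuous_at_imp_continuous_on DERIV_isCont[OF r_deriv])
    moreover have "\<forall>v \<ge> u. (\<forall>u'\<in>{u..v}. r u' > xS * u') \<longrightarrow> ingoing_null_ode (B_ext l1 l2) r v {u..}"
      using r_deriv u unfolding ingoing_null_ode_def by (auto intro: has_field_derivative_at_within)
    ultimately obtain v where v: "v > u" "r v = xS * v"
      using ingoing_ray_reaches_matching_surface[OF l xS F_xS F_xs u] r u by blast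
    moreover have "xS * v < r v" using r v(1) u by (meson less_trans)
    ultimately show False by simp
  qed
  have "y u1 \<le> xs"
    using u1 by (simp add: y_def divide_le_eq mult.commute)
  with y_ge[OF u1(1)] have "y u1 = xs"
    by simp
  then have "y u2 = xs"
    using homothetic_ratio_stays_at_root[OF l xS F_xS F_xs y_deriv y_ge u1(1) _ u2(1)] by blast
  with u2 show False
    by (simp add: y_def divide_eq_eq)
qed

text \<open>In the theorem, the bound \<open>R\<^sub>b < R\<^sub>A\<^sub>H\<close> only guarantees that an apparent horizon exists;
  \<open>h(x\<^sub>A\<^sub>H) = 0\<close> alone forces \<open>F(x\<^sub>A\<^sub>H) = -2 x\<^sub>A\<^sub>H < 0\<close>.\<close>

lemma horizon_below_homothetic_root:
  assumes l: "l1 \<ge> 0" "l2 \<ge> 0" and xS: "0 < xS" "xS < xs"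
    and F_xS: "homothetic_norm l1 l2 xS < 0" and F_xs: "homothetic_norm l1 l2 xs = 0"
    and xAH: "xS < xAH" "hfun l1 l2 xAH = 0"
  shows "xAH < xs"
proof (rule ccontr)
  assume "\<not> xAH < xs"
  then have "homothetic_norm l1 l2 xAH \<ge> 0"
    using convex_on_sign_change(2)[OF convex_on_Ici_homothetic_norm[OF l xS(1)] F_xS xS(2) F_xs]
    by (cases "xAH = xs") (auto simp: F_xs intro: less_imp_le)
  moreover have "homothetic_norm l1 l2 xAH = - 2 * xAH"
    using xAH(2) by (simp add: homothetic_norm_def)
  ultimately show False
    using xAH(1) xS by simp
qed

lemma homothetic_ray_ingoing_null:
  assumes "homothetic_norm l1 l2 x = 0" "u > 0"
  shows "ingoing_null_ode (B_ext l1 l2) (\<lambda>u. x * u) u S"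
proof -
  have "- B_ext l1 l2 u (x * u) / 2 = x"
    using assms by (simp add: B_ext_def homothetic_norm_def)
  then show ?thesis
    unfolding ingoing_null_ode_def by (auto intro!: derivative_eq_intros)
qed

lemma matching_surface_parameters:
  fixes K \<beta> \<delta> Rb :: real
  assumes \<beta>: "\<beta> > 0" and \<delta>: "\<delta> > 0" "\<delta> ^ 3 + K * \<delta> - 3 * \<beta> / 2 = 0"
    and Rb: "Rb > 0" "K * Rb\<^sup>2 < 1"
  defines "xS \<equiv> x_Sigma K \<delta> Rb" and "l1 \<equiv> lambda1 K \<beta> \<delta> Rb" and "l2 \<equiv> lambda2 K \<beta> \<delta> Rb"
  shows "xS > 0" and "l1 \<ge> 0" and "l2 > 0" and "homothetic_norm l1 l2 xS < 0"
proof -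
  define s where "s = sqrt (1 - K * Rb\<^sup>2)"
  have s: "s > 0" "s\<^sup>2 = 1 - K * Rb\<^sup>2"
    using Rb by (simp_all add: s_def)
  define D where "D = s + \<delta> * Rb"
  have D: "D > 0"
    using s \<delta> Rb by (simp add: D_def add_pos_pos)
  have C: "C_k K \<delta> Rb = 1 / D"
    by (simp add: C_k_def D_def s_def)
  have xS: "xS = Rb * \<delta> * D" and l1: "l1 = \<beta> * Rb ^ 3 * D"
    and l2: "l2 = \<beta> / (2 * \<delta> ^ 3 * D\<^sup>2)"
    using D by (simp_all add: xS_def x_Sigma_def l1_def lambda1_def l2_def lambda2_def C power_divide)
  show "xS > 0" "l1 \<ge> 0" "l2 > 0"
    using D \<beta> \<delta> Rb by (simp_all add: xS l1 l2)
  text \<open>The cubic for \<open>\<delta>\<close> gives \<open>\<lambda>\<^sub>1/x\<^sub>\<Sigma> + \<lambda>\<^sub>2 x\<^sub>\<Sigma>\<^sup>2 = R\<^sub>b\<^sup>2 (\<delta>\<^sup>2 + k)\<close>, so that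
    \<open>F(x\<^sub>\<Sigma>) = -(\<surd>(1 - k R\<^sub>b\<^sup>2) + \<delta> R\<^sub>b)\<^sup>2\<close>.\<close>
  have \<beta>3: "\<beta> * 3 = 2 * \<delta> * (\<delta>\<^sup>2 + K)"
    using \<delta>(2) by (simp add: algebra_simps power2_eq_square power3_eq_cube)
  have "l1 / xS + l2 * xS\<^sup>2 = Rb\<^sup>2 * (\<beta> * 3) / (2 * \<delta>)"
    using D \<delta> Rb by (simp add: xS l1 l2 field_simps power2_eq_square power3_eq_cube)
  also have "\<dots> = Rb\<^sup>2 * (\<delta>\<^sup>2 + K)"
    using \<delta>(1) unfolding \<beta>3 by simp
  finally have "homothetic_norm l1 l2 xS = -1 + Rb\<^sup>2 * (\<delta>\<^sup>2 + K) - 2 * xS"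
    by (simp add: homothetic_norm_def hfun_def)
  also have "\<dots> = - D\<^sup>2"
    using s(2) by (simp add: xS D_def power2_eq_square algebra_simps)
  finally show "homothetic_norm l1 l2 xS < 0"
    using D by simp
qed

theorem mainTheorem5:
  fixes k :: int and \<beta> \<delta> Rb :: real
  assumes hk: "k \<in> {-1, 0, 1}"
    and h\<beta>: "\<beta> > 0"
    and h\<delta>: "\<delta> > 0" "\<delta> ^ 3 + real_of_int k * \<delta> - 3 * \<beta> / 2 = 0"
    and hRb: "Rb > 0" "k = 1 \<longrightarrow> Rb < 1"
  defines "xS \<equiv> x_Sigma (real_of_int k) \<delta> Rb"
    and "l1 \<equiv> lambda1 (real_of_int k) \<beta> \<delta> Rb"
    and "l2 \<equiv> lambda2 (real_of_int k) \<beta> \<delta> Rb"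
  shows "\<exists>xs > xS.
     (\<forall>x > xs. \<forall>p \<in> homothetic_points x.
         hs_spacelike (gext (B_ext l1 l2)) p (homothetic_tangent x))
   \<and> (\<forall>p \<in> homothetic_points xs.
         hs_null (gext (B_ext l1 l2)) p (homothetic_tangent xs))
   \<and> (\<forall>x. xS < x \<and> x < xs \<longrightarrow> (\<forall>p \<in> homothetic_points x.
         hs_timelike (gext (B_ext l1 l2)) p (homothetic_tangent x)))
   \<and> (Rb < R_AH (real_of_int k) \<delta> \<longrightarrow>
         (\<forall>xAH. xAH > xS \<and> hfun l1 l2 xAH = 0 \<longrightarrow> xs > xAH))
   \<and> (\<forall>u > 0. ingoing_null_ode (B_ext l1 l2) (\<lambda>u. xs * u) u UNIV)
   \<and> (\<forall>r u0. u0 > 0 \<and> xS * u0 < r u0 \<and> r u0 < xs * u0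
        \<and> continuous_on {u0..} r
        \<and> (\<forall>u \<ge> u0. (\<forall>u' \<in> {u0..u}. r u' > xS * u') \<longrightarrow>
              ingoing_null_ode (B_ext l1 l2) r u {u0..})
        \<longrightarrow> (\<exists>u1 > u0. r u1 = xS * u1))
   \<and> (\<forall>r. (\<forall>u > 0. ingoing_null_ode (B_ext l1 l2) r u UNIV \<and> r u > xS * u)
        \<and> filterlim r at_top at_top
        \<and> (\<exists>u > 0. r u \<noteq> xs * u)
        \<longrightarrow> (\<forall>u > 0. r u > xs * u))"
proof -
  have "real_of_int k * Rb\<^sup>2 < 1"
    using hk hRb by (auto simp: power_less_one_iff) (use zero_le_power2[of Rb] in linarith)+
  then have xS: "xS > 0" and l: "l1 \<ge> 0" "l2 > 0" and F_xS: "homothetic_norm l1 l2 xS < 0"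
    using matching_surface_parameters[OF h\<beta> h\<delta> hRb(1)] unfolding xS_def l1_def l2_def by auto
  obtain xs where xs: "xs > xS" "homothetic_norm l1 l2 xs = 0"
    using homothetic_norm_has_root[OF l(1,2) xS F_xS] by blast
  have cvx: "convex_on {xS..} (homothetic_norm l1 l2)"
    using convex_on_Ici_homothetic_norm[OF l(1) _ xS] l(2) by simp
  note F_neg = convex_on_sign_change(1)[OF cvx F_xS xs]
    and F_pos = convex_on_sign_change(2)[OF cvx F_xS xs]
  show ?thesis
    apply (intro exI[of _ xs] conjI)
    subgoal by (fact xs(1))
    subgoal by (intro allI impI ballI homothetic_spacelike F_pos) (use xS xs in auto)
    subgoal using homothetic_null xs(2) by blast
    subgoal by (intro allI impI ballI homothetic_timelike F_neg) (use xS in auto)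
    subgoal using horizon_below_homothetic_root[OF l(1) _ xS xs(1) F_xS xs(2)] l(2) by auto
    subgoal using homothetic_ray_ingoing_null xs(2) by blast
    subgoal using ingoing_ray_reaches_matching_surface[OF l(1) _ xS xs(1) F_xS xs(2)] l(2) by auto
    subgoal
      using escaping_ray_above_critical[OF l(1) _ xS xs(1) F_xS xs(2)] l(2) by auto
    done
qed

end
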